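(* For every finite-dimensional representation $\rho$ of $\mathrm{U}(n)$ and every weighted hypergraph $\Gamma=([n],w)$, the torus-invariant subspace $\mathrm{TorInv}(\rho)$ is invariant under ${\cal L}(\Gamma,\rho)$.
   Context: A weighted hypergraph $\Gamma=([n],w)$ assigns a weight $w_B$ to every $B\subseteq[n]$. $\mathrm{U}_B\le\mathrm{U}(n)$ is the subgroup of unitaries coinciding with the identity outside the minor with rows and columns in $B$, and $\mu_B$ its Haar probability measure; ${\cal L}(\Gamma,\rho)=\sum_Bw_B[I-\int_{\mathrm{U}_B}\rho(A)d\mu_B(A)]$. $T_n\le\mathrm{U}(n)$ is the subgroup of diagonal unitary matrices and, for $\rho\colon\mathrm{U}(n)\to\mathrm{GL}(V)$, $\mathrm{TorInv}(\rho)=\{v\in V:\rho(A)v=v\ \forall A\in T_n\}$. *)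

theory Defs
  imports "HOL-Probability.Probability"
begin

text \<open>Complex n x n matrices are indexed by a finite type 'n; [n] is UNIV :: 'n set.\<close>

definition conj_transpose :: "complex^'n^'m \<Rightarrow> complex^'m^'n" where
  "conj_transpose A = (\<chi> i j. cnj (A $ j $ i))"

definition unitary_group :: "(complex^'n^'n) set" where
  "unitary_group = {A. A ** conj_transpose A = mat 1 \<and> conj_transpose A ** A = mat 1}"

definition unitary_sub :: "'n set \<Rightarrow> (complex^'n^'n) set" where
  "unitary_sub B = {A \<in> unitary_group.
      \<forall>i j. (i \<notin> B \<or> j \<notin> B) \<longrightarrow> A $ i $ j = (if i = j then 1 else 0)}"

definition torus :: "(complex^'n^'n) set" where
  "torus = {A \<in> unitary_group. \<forall>i j. i \<noteq> j \<longrightarrow> A $ i $ j = 0}"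

definition haar_measure :: "(complex^'n^'n) set \<Rightarrow> (complex^'n^'n) measure" where
  "haar_measure G = (THE M. sets M = sets borel \<and> prob_space M \<and> emeasure M G = 1 \<and>
      (\<forall>A\<in>G. distr M borel (\<lambda>X. A ** X) = M))"

definition is_rep :: "(complex^'n^'n \<Rightarrow> complex^'m^'m) \<Rightarrow> bool" where
  "is_rep \<rho> \<longleftrightarrow> continuous_on unitary_group \<rho> \<and> \<rho> (mat 1) = mat 1 \<and>
     (\<forall>A\<in>unitary_group. \<forall>B\<in>unitary_group. \<rho> (A ** B) = \<rho> A ** \<rho> B)"

definition hyper_laplacian ::
  "('n set \<Rightarrow> real) \<Rightarrow> (complex^'n^'n \<Rightarrow> complex^'m^'m) \<Rightarrow> complex^'m^'m" where
  "hyper_laplacian w \<rho> =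
     (\<Sum>B\<in>(UNIV :: 'n set set). w B *\<^sub>R (mat 1 - integral\<^sup>L (haar_measure (unitary_sub B)) \<rho>))"

definition TorInv :: "(complex^'n^'n \<Rightarrow> complex^'m^'m) \<Rightarrow> (complex^'m) set" where
  "TorInv \<rho> = {v. \<forall>A\<in>torus. \<rho> A *v v = v}"

end

(*
  If v is torus invariant, then hyper_laplacian w rho v is a combination of v and the Haar
  averages P_B v = (integral of rho over U_B) v, so it suffices that each P_B v is torus invariant.
  A diagonal unitary t splits as t_B t_O with t_B in U_B and t_O diagonal and equal to 1 on B,
  so t_O commutes with U_B and fixes v; hence rho t (rho X v) = rho (t_B X) v for X in U_B, and
  left invariance of the Haar measure of U_B gives rho t (P_B v) = P_B v.

  Since haar_measure is a definite description, the work lies in showing that U_B has exactly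
  one Haar measure.  Uniqueness is the classical Fubini argument.  For existence, push the uniform
  distribution on a bounded, U_B-invariant open set of matrices forward along the unitary factor
  of the QR decomposition of the B x B block (Gram-Schmidt), which is U_B-equivariant; the uniform
  distribution is U_B-invariant because Lebesgue measure is invariant under linear isometries.
*)

theory Submission
  imports Defs
begin

section \<open>Unitary matrices\<close>

definition cinner :: "complex^'n \<Rightarrow> complex^'n \<Rightarrow> complex" where
  "cinner u v = (\<Sum>i\<in>UNIV. u $ i * cnj (v $ i))"

lemma cinner_zero_left [simp]: "cinner 0 w = 0"
  by (simp add: cinner_def)

lemma cinner_add_left: "cinner (u + v) w = cinner u w + cinner v w"
  by (simp add: cinner_def algebra_simps sum.distrib)

lemma cinner_diff_left: "cinner (u - v) w = cinner u w - cinner v w"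
  by (simp add: cinner_def algebra_simps sum_subtractf)

lemma cinner_scalar_mult_left: "cinner (c *s u) w = c * cinner u w"
  by (simp add: cinner_def sum_distrib_left mult.assoc)

lemma cinner_scaleR_left: "cinner (c *\<^sub>R u) w = of_real c * cinner u w"
  by (simp add: cinner_def sum_distrib_left mult.assoc) (simp add: scaleR_conv_of_real)

lemma cinner_sum_left: "cinner (\<Sum>j\<in>S. f j) w = (\<Sum>j\<in>S. cinner (f j) w)"
  by (induction S rule: infinite_finite_induct) (simp_all add: cinner_add_left)

lemma cinner_commute: "cinner v u = cnj (cinner u v)"
  by (simp add: cinner_def mult.commute)

lemma cinner_axis_right: "cinner v (axis j 1) = v $ j"
proof -
  have "cinner v (axis j 1) = (\<Sum>i\<in>UNIV. if i = j then v $ i else 0)"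
    unfolding cinner_def by (rule sum.cong) (auto simp: axis_def)
  then show ?thesis by simp
qed

lemma cinner_axis_left: "cinner (axis j 1) v = cnj (v $ j)"
  by (subst cinner_commute) (simp add: cinner_axis_right)

lemma axis_nth_if: "axis j x $ i = (if i = j then x else 0)"
  by (simp add: axis_def)

lemma cinner_axis_axis: "cinner (axis i 1) (axis j 1) = (if i = j then 1 else 0)"
  by (simp add: cinner_axis_right axis_nth_if)

lemma cinner_self_eq_norm_square: "cinner v v = of_real ((norm v)\<^sup>2)"
proof -
  have "(norm v)\<^sup>2 = (\<Sum>i\<in>UNIV. (cmod (v $ i))\<^sup>2)"
    by (simp add: norm_vec_def L2_set_def sum_nonneg)
  then show ?thesis by (simp add: cinner_def complex_norm_square del: of_real_power)
qed

lemma norm_square_eq_sum_columns: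
  fixes Z :: "'a::real_normed_vector^'n^'m"
  shows "(norm Z)\<^sup>2 = (\<Sum>j\<in>UNIV. (norm (column j Z))\<^sup>2)"
proof -
  have "(norm Z)\<^sup>2 = (\<Sum>i\<in>UNIV. \<Sum>j\<in>UNIV. (norm (Z $ i $ j))\<^sup>2)"
    by (simp add: norm_vec_def L2_set_def sum_nonneg)
  also have "\<dots> = (\<Sum>j\<in>UNIV. \<Sum>i\<in>UNIV. (norm (Z $ i $ j))\<^sup>2)"
    by (rule sum.swap)
  also have "\<dots> = (\<Sum>j\<in>UNIV. (norm (column j Z))\<^sup>2)"
    by (simp add: norm_vec_def L2_set_def sum_nonneg column_def)
  finally show ?thesis .
qed

lemma column_matrix_mult: "column j (A ** Z) = A *v column j Z"
  by (simp add: vec_eq_iff column_def matrix_matrix_mult_def matrix_vector_mult_def)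

lemma matrix_vector_mult_axis: "A *v axis j 1 = column j (A :: 'a::comm_semiring_1^'n^'m)"
  by (simp add: vec_eq_iff matrix_vector_mult_def column_def axis_def if_distrib cong: if_cong)

lemma conj_transpose_nth [simp]: "conj_transpose A $ i $ j = cnj (A $ j $ i)"
  by (simp add: conj_transpose_def)

lemma conj_transpose_conj_transpose [simp]: "conj_transpose (conj_transpose A) = A"
  by (simp add: vec_eq_iff)

lemma conj_transpose_mult: "conj_transpose (A ** B) = conj_transpose B ** conj_transpose A"
  by (simp add: vec_eq_iff matrix_matrix_mult_def mult.commute)

lemma conj_transpose_mult_self_nth:
  "(conj_transpose Q ** Q) $ i $ j = cinner (column j Q) (column i Q)"
  by (simp add: matrix_matrix_mult_def cinner_def column_def mult.commute)

lemma unitary_group_left_inverse: "A \<in> unitary_group \<Longrightarrow> conj_transpose A ** A = mat 1"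
  by (simp add: unitary_group_def)

lemma unitary_group_conj_transpose: "A \<in> unitary_group \<Longrightarrow> conj_transpose A \<in> unitary_group"
  by (simp add: unitary_group_def)

lemma unitary_group_mult:
  assumes "A \<in> unitary_group" "B \<in> unitary_group"
  shows "A ** B \<in> unitary_group"
proof -
  have "A ** B ** conj_transpose (A ** B) = A ** (B ** conj_transpose B) ** conj_transpose A"
    "conj_transpose (A ** B) ** (A ** B) = conj_transpose B ** (conj_transpose A ** A) ** B"
    by (simp_all add: conj_transpose_mult matrix_mul_assoc)
  then show ?thesis
    using assms by (simp add: unitary_group_def)
qed

lemma cinner_unitary_mult:
  assumes "A \<in> unitary_group"
  shows "cinner (A *v u) (A *v v) = cinner u v"
proof -
  have orth: "(\<Sum>i\<in>UNIV. cnj (A $ i $ l) * A $ i $ k) = (if l = k then 1 else 0)" for l k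
    using arg_cong[OF unitary_group_left_inverse[OF assms], of "\<lambda>M. M $ l $ k"]
    by (simp add: matrix_matrix_mult_def mat_def)
  have "cinner (A *v u) (A *v v) =
      (\<Sum>i\<in>UNIV. \<Sum>k\<in>UNIV. \<Sum>l\<in>UNIV. (u $ k * cnj (v $ l)) * (cnj (A $ i $ l) * A $ i $ k))"
    by (simp add: cinner_def matrix_vector_mult_def sum_distrib_left sum_distrib_right mult_ac)
      (rule sum.cong[OF refl], rule sum.swap)
  also have "\<dots> = (\<Sum>k\<in>UNIV. \<Sum>l\<in>UNIV. (u $ k * cnj (v $ l)) * (\<Sum>i\<in>UNIV. cnj (A $ i $ l) * A $ i $ k))"
    by (simp add: sum_distrib_left) (subst sum.swap, rule sum.cong[OF refl], rule sum.swap)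
  also have "\<dots> = cinner u v"
    by (simp add: orth cinner_def if_distrib cong: if_cong)
  finally show ?thesis .
qed

lemma norm_unitary_mult:
  assumes "A \<in> unitary_group"
  shows "norm (A *v v) = norm v"
proof -
  have "complex_of_real ((norm (A *v v))\<^sup>2) = of_real ((norm v)\<^sup>2)"
    using cinner_unitary_mult[OF assms, of v v] by (simp only: cinner_self_eq_norm_square)
  then have "(norm (A *v v))\<^sup>2 = (norm v)\<^sup>2"
    using of_real_eq_iff by blast
  then show ?thesis by (simp add: power2_eq_iff_nonneg)
qed

lemma norm_unitary_mult_matrix:
  fixes Z :: "complex^'p^'n"
  assumes "A \<in> unitary_group"
  shows "norm (A ** Z) = norm Z"
proof -
  have "(norm (A ** Z))\<^sup>2 = (norm Z)\<^sup>2"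
    by (simp add: norm_square_eq_sum_columns column_matrix_mult norm_unitary_mult[OF assms])
  then show ?thesis by (simp add: power2_eq_iff_nonneg)
qed

lemma linear_matrix_mult_left: "linear (\<lambda>Z. (A :: 'a::real_algebra_1^'n^'m) ** Z)"
  by (rule linearI) (simp_all add: vec_eq_iff matrix_matrix_mult_def distrib_left sum.distrib
      scaleR_sum_right mult_scaleR_right)

lemma surj_unitary_mult:
  assumes "A \<in> unitary_group"
  shows "surj (\<lambda>Z. A ** Z)"
proof (rule surjI)
  show "A ** (conj_transpose A ** Z) = Z" for Z
    using assms by (simp add: matrix_mul_assoc unitary_group_def)
qed

lemma unitary_sub_subset: "unitary_sub B \<subseteq> unitary_group"
  by (auto simp: unitary_sub_def)

lemma unitary_sub_nth_outside:
  "A \<in> unitary_sub B \<Longrightarrow> i \<notin> B \<or> j \<notin> B \<Longrightarrow> A $ i $ j = (if i = j then 1 else 0)"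
  by (simp add: unitary_sub_def)

lemma unitary_sub_mult_axis:
  assumes "A \<in> unitary_sub B" "j \<notin> B"
  shows "A *v axis j 1 = axis j 1"
proof -
  have "A $ i $ j = (if i = j then 1 else 0)" for i
    using unitary_sub_nth_outside[OF assms(1)] assms(2) by blast
  then show ?thesis
    unfolding matrix_vector_mult_axis by (simp add: column_def axis_def vec_eq_iff)
qed

lemma unitary_sub_conj_transpose: "A \<in> unitary_sub B \<Longrightarrow> conj_transpose A \<in> unitary_sub B"
  by (auto simp: unitary_sub_def unitary_group_conj_transpose)

lemma closed_unitary_sub: "closed (unitary_sub B)"
proof -
  have "unitary_sub B = {A. A ** conj_transpose A = mat 1} \<inter> {A. conj_transpose A ** A = mat 1} \<inter>
      (\<Inter>p\<in>{p. fst p \<notin> B \<or> snd p \<notin> B}. {A. A $ fst p $ snd p = (if fst p = snd p then 1 else 0)})"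
    by (auto simp: unitary_sub_def unitary_group_def)
  moreover have "closed {A::complex^'n^'n. A ** conj_transpose A = mat 1}"
    "closed {A::complex^'n^'n. conj_transpose A ** A = mat 1}"
    "closed {A::complex^'n^'n. A $ i $ j = c}" for i j c
    unfolding matrix_matrix_mult_def conj_transpose_def
    by (intro closed_Collect_eq continuous_intros)+
  ultimately show ?thesis
    by (auto intro!: closed_Int closed_INT)
qed

section \<open>Haar measures\<close>

definition is_haar :: "(complex^'n^'n) set \<Rightarrow> (complex^'n^'n) measure \<Rightarrow> bool" where
  "is_haar G M \<longleftrightarrow> sets M = sets borel \<and> prob_space M \<and> emeasure M G = 1 \<and>
      (\<forall>A\<in>G. distr M borel (\<lambda>X. A ** X) = M)"

lemma haar_measure_eq_The: "haar_measure G = (THE M. is_haar G M)"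
  by (simp add: haar_measure_def is_haar_def)

lemma
  assumes "is_haar G M"
  shows is_haar_sets: "sets M = sets borel"
    and is_haar_prob_space: "prob_space M"
    and is_haar_emeasure: "emeasure M G = 1"
    and is_haar_distr_left_mult: "A \<in> G \<Longrightarrow> distr M borel (\<lambda>X. A ** X) = M"
  using assms by (auto simp: is_haar_def)

lemma borel_measurable_matrix_mult_left [measurable]:
  "(\<lambda>X::complex^'n^'n. A ** X) \<in> borel_measurable borel"
  unfolding matrix_matrix_mult_def by (intro borel_measurable_continuous_onI continuous_intros)

lemma borel_measurable_matrix_mult_right [measurable]:
  "(\<lambda>X::complex^'n^'n. X ** A) \<in> borel_measurable borel"
  unfolding matrix_matrix_mult_def by (intro borel_measurable_continuous_onI continuous_intros)

lemma borel_measurable_conj_transpose [measurable]: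
  "(conj_transpose :: complex^'n^'n \<Rightarrow> _) \<in> borel_measurable borel"
  unfolding conj_transpose_def by (intro borel_measurable_continuous_onI continuous_intros)

lemma borel_measurable_matrix_mult_swap:
  "(\<lambda>(X, Y). Y ** X :: complex^'n^'n) \<in> borel_measurable (borel \<Otimes>\<^sub>M borel)"
  unfolding borel_prod case_prod_beta matrix_matrix_mult_def
  by (intro borel_measurable_continuous_onI continuous_intros)

lemma AE_is_haar:
  assumes "is_haar G M" "G \<in> sets borel"
  shows "AE X in M. X \<in> G"
  using prob_space.AE_in_set_eq_1[OF is_haar_prob_space[OF assms(1)]] assms
  by (simp add: is_haar_sets is_haar_emeasure measure_def)

lemma nn_integral_is_haar_left_mult:
  assumes M: "is_haar G M" and A: "A \<in> G" and f: "f \<in> borel_measurable borel"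
  shows "(\<integral>\<^sup>+X. f (A ** X) \<partial>M) = (\<integral>\<^sup>+X. f X \<partial>M)"
proof -
  have "(\<lambda>X. A ** X) \<in> M \<rightarrow>\<^sub>M borel"
    by (simp add: measurable_cong_sets[OF is_haar_sets[OF M] refl])
  then have "(\<integral>\<^sup>+X. f (A ** X) \<partial>M) = (\<integral>\<^sup>+X. f X \<partial>distr M borel (\<lambda>X. A ** X))"
    by (rule nn_integral_distr[symmetric]) (use f in simp)
  then show ?thesis
    by (simp add: is_haar_distr_left_mult[OF M A])
qed

lemma integral_is_haar_left_mult:
  fixes f :: "complex^'n^'n \<Rightarrow> 'b::{banach, second_countable_topology}"
  assumes M: "is_haar G M" and A: "A \<in> G" and f: "f \<in> borel_measurable borel"
  shows "(\<integral>X. f (A ** X) \<partial>M) = (\<integral>X. f X \<partial>M)"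
proof -
  have "(\<lambda>X. A ** X) \<in> M \<rightarrow>\<^sub>M borel"
    by (simp add: measurable_cong_sets[OF is_haar_sets[OF M] refl])
  then have "(\<integral>X. f (A ** X) \<partial>M) = (\<integral>X. f X \<partial>distr M borel (\<lambda>X. A ** X))"
    by (rule integral_distr[symmetric]) (use f in simp)
  then show ?thesis
    by (simp add: is_haar_distr_left_mult[OF M A])
qed

lemma nn_integral_distr_conj_transpose_right_mult:
  assumes G_ct: "\<And>A. A \<in> G \<Longrightarrow> conj_transpose A \<in> G"
    and N: "is_haar G N" and X: "X \<in> G" and f: "f \<in> borel_measurable borel"
  shows "(\<integral>\<^sup>+Y. f (Y ** X) \<partial>distr N borel conj_transpose) = (\<integral>\<^sup>+Y. f Y \<partial>distr N borel conj_transpose)"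
proof -
  have ct_N: "conj_transpose \<in> N \<rightarrow>\<^sub>M borel"
    by (simp add: measurable_cong_sets[OF is_haar_sets[OF N] refl])
  have "(\<integral>\<^sup>+Y. f (Y ** X) \<partial>distr N borel conj_transpose) = (\<integral>\<^sup>+Y. f (conj_transpose Y ** X) \<partial>N)"
    by (rule nn_integral_distr[OF ct_N]) (use f in measurable)
  also have "\<dots> = (\<integral>\<^sup>+Y. f (conj_transpose (conj_transpose X ** Y)) \<partial>N)"
    by (simp add: conj_transpose_mult)
  also have "\<dots> = (\<integral>\<^sup>+Y. f (conj_transpose Y) \<partial>N)"
    by (rule nn_integral_is_haar_left_mult[OF N G_ct[OF X]]) (use f in measurable)
  also have "\<dots> = (\<integral>\<^sup>+Y. f Y \<partial>distr N borel conj_transpose)"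
    by (rule nn_integral_distr[OF ct_N, symmetric]) (use f in measurable)
  finally show ?thesis .
qed

text \<open>Only closure of \<open>G\<close> under \<open>conj_transpose\<close> (the inverse on unitary matrices) is needed for
  uniqueness: Fubini lets the left invariance of \<open>M\<close> and the right invariance of the reflected
  measure of \<open>N\<close> act on the two factors of \<open>Y ** X\<close>.\<close>

lemma
  assumes G: "G \<in> sets borel" and G_ct: "\<And>A. A \<in> G \<Longrightarrow> conj_transpose A \<in> G"
    and N: "is_haar G N"
  shows prob_space_distr_conj_transpose: "prob_space (distr N borel conj_transpose)"
    and AE_distr_conj_transpose: "AE Y in distr N borel conj_transpose. Y \<in> G"
proof -
  have ct_N: "conj_transpose \<in> N \<rightarrow>\<^sub>M borel"
    by (simp add: measurable_cong_sets[OF is_haar_sets[OF N] refl])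
  show "prob_space (distr N borel conj_transpose)"
    using is_haar_prob_space[OF N] ct_N by (rule prob_space.prob_space_distr)
  show "AE Y in distr N borel conj_transpose. Y \<in> G"
    using AE_is_haar[OF N G] G_ct by (subst AE_distr_iff) (auto simp: G ct_N)
qed

lemma is_haar_eq_distr_conj_transpose:
  assumes G: "G \<in> sets borel" and G_ct: "\<And>A. A \<in> G \<Longrightarrow> conj_transpose A \<in> G"
    and M: "is_haar G M" and N: "is_haar G N"
  shows "M = distr N borel conj_transpose"
proof (rule measure_eqI)
  define N' where "N' = distr N borel conj_transpose"
  have sM: "sets M = sets borel" and sN': "sets N' = sets borel"
    using M by (simp_all add: is_haar_sets N'_def)
  have "prob_space N'"
    unfolding N'_def using G G_ct N by (rule prob_space_distr_conj_transpose)
  have AE_N': "AE Y in N'. Y \<in> G"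
    unfolding N'_def using G G_ct N by (rule AE_distr_conj_transpose)
  interpret pair_sigma_finite M N'
    using is_haar_prob_space[OF M] \<open>prob_space N'\<close>
    by (simp add: pair_sigma_finite_def prob_space_imp_sigma_finite)
  fix E assume "E \<in> sets M"
  then have E: "E \<in> sets borel" using sM by simp
  have "emeasure M E = (\<integral>\<^sup>+Y. emeasure M E \<partial>N')"
    using prob_space.emeasure_space_1[OF \<open>prob_space N'\<close>] by simp
  also have "\<dots> = (\<integral>\<^sup>+Y. (\<integral>\<^sup>+X. indicator E (Y ** X) \<partial>M) \<partial>N')"
    using AE_N' by (intro nn_integral_cong_AE, eventually_elim)
      (use E sM in \<open>simp add: nn_integral_is_haar_left_mult[OF M]\<close>)
  also have "\<dots> = (\<integral>\<^sup>+X. (\<integral>\<^sup>+Y. indicator E (Y ** X) \<partial>N') \<partial>M)"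
  proof (rule Fubini')
    show "(\<lambda>(X, Y). indicator E (Y ** X) :: ennreal) \<in> borel_measurable (M \<Otimes>\<^sub>M N')"
      unfolding measurable_cong_sets[OF sets_pair_measure_cong[OF sM sN'] refl] case_prod_beta
      using borel_measurable_matrix_mult_swap[unfolded case_prod_beta] E by measurable
  qed
  also have "\<dots> = (\<integral>\<^sup>+X. emeasure N' E \<partial>M)"
    using AE_is_haar[OF M G]
    by (intro nn_integral_cong_AE, eventually_elim)
      (use E sN' in \<open>simp add: N'_def nn_integral_distr_conj_transpose_right_mult[OF G_ct N]\<close>)
  also have "\<dots> = emeasure N' E"
    using prob_space.emeasure_space_1[OF is_haar_prob_space[OF M]] by simp
  finally show "emeasure M E = emeasure (distr N borel conj_transpose) E"
    by (simp add: N'_def)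
qed (simp add: is_haar_sets[OF M])

lemma is_haar_unique:
  assumes "G \<in> sets borel" "\<And>A. A \<in> G \<Longrightarrow> conj_transpose A \<in> G"
    and "is_haar G M" "is_haar G N"
  shows "M = N"
  using is_haar_eq_distr_conj_transpose[OF assms(1,2)] assms(3,4) by metis

lemma haar_measure_is_haar:
  assumes "G \<in> sets borel" "\<And>A. A \<in> G \<Longrightarrow> conj_transpose A \<in> G" "is_haar G M"
  shows "is_haar G (haar_measure G)"
  unfolding haar_measure_eq_The
  by (rule theI[of _ M]) (use assms is_haar_unique in blast)+

section \<open>Invariance of Lebesgue measure under linear isometries\<close>

lemma nn_integral_translation_invariant:
  fixes M :: "'a::euclidean_space measure"
  assumes M: "sets M = sets borel" "distr M borel ((+) c) = M"
    and f: "f \<in> borel_measurable borel"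
  shows "(\<integral>\<^sup>+x. f (c + x) \<partial>M) = (\<integral>\<^sup>+x. f x \<partial>M)"
proof -
  have "((+) c) \<in> M \<rightarrow>\<^sub>M borel"
    by (simp add: measurable_cong_sets[OF M(1) refl])
  then have "(\<integral>\<^sup>+x. f (c + x) \<partial>M) = (\<integral>\<^sup>+x. f x \<partial>distr M borel ((+) c))"
    by (rule nn_integral_distr[symmetric]) (use f in simp)
  then show ?thesis
    by (simp add: M(2))
qed

lemma nn_integral_translation_swap:
  fixes M N :: "'a::euclidean_space measure"
  assumes sM: "sets M = sets borel" and sN: "sets N = sets borel"
    and "sigma_finite_measure M" "sigma_finite_measure N"
    and tM: "\<And>c. distr M borel ((+) c) = M"
    and f [measurable]: "(\<lambda>(x, y). f x y) \<in> borel_measurable (borel \<Otimes>\<^sub>M borel)"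
  shows "(\<integral>\<^sup>+x. (\<integral>\<^sup>+y. f x (x + y) \<partial>N) \<partial>M) = (\<integral>\<^sup>+x. (\<integral>\<^sup>+y. f (- y + x) x \<partial>N) \<partial>M)"
proof -
  interpret pair_sigma_finite M N
    using assms by (simp add: pair_sigma_finite_def)
  have pair_measurable: "(\<lambda>(x, y). g x y) \<in> borel_measurable (M \<Otimes>\<^sub>M N)"
    if "(\<lambda>(x, y). g x y) \<in> borel_measurable (borel \<Otimes>\<^sub>M borel)" for g :: "'a \<Rightarrow> 'a \<Rightarrow> ennreal"
    using that by (simp add: measurable_cong_sets[OF sets_pair_measure_cong[OF sM sN] refl])
  have "(\<integral>\<^sup>+x. (\<integral>\<^sup>+y. f x (x + y) \<partial>N) \<partial>M) = (\<integral>\<^sup>+y. (\<integral>\<^sup>+x. f x (x + y) \<partial>M) \<partial>N)"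
    by (rule Fubini'[symmetric], rule pair_measurable) measurable
  also have "\<dots> = (\<integral>\<^sup>+y. (\<integral>\<^sup>+x. f (- y + x) x \<partial>M) \<partial>N)"
  proof (rule nn_integral_cong)
    fix y
    have "(\<integral>\<^sup>+x. f (- y + x) x \<partial>M) = (\<integral>\<^sup>+x. f (- y + (y + x)) (y + x) \<partial>M)"
      by (rule nn_integral_translation_invariant[OF sM tM, symmetric]) measurable
    then show "(\<integral>\<^sup>+x. f x (x + y) \<partial>M) = (\<integral>\<^sup>+x. f (- y + x) x \<partial>M)"
      by (simp add: add.commute)
  qed
  also have "\<dots> = (\<integral>\<^sup>+x. (\<integral>\<^sup>+y. f (- y + x) x \<partial>N) \<partial>M)"
    by (rule Fubini', rule pair_measurable) measurable
  finally show ?thesis .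
qed

text \<open>Both sides are the integral of \<open>indicator A x * indicator B (x + y)\<close> over \<open>M \<Otimes> N\<close>.\<close>

lemma translation_invariant_emeasure_mult:
  fixes M N :: "'a::euclidean_space measure"
  assumes sM: "sets M = sets borel" and sN: "sets N = sets borel"
    and sf: "sigma_finite_measure M" "sigma_finite_measure N"
    and tM: "\<And>c. distr M borel ((+) c) = M" and tN: "\<And>c. distr N borel ((+) c) = N"
    and A: "A \<in> sets borel" and B: "B \<in> sets borel"
  shows "emeasure M A * emeasure N B = emeasure M B * emeasure N (uminus -` A)"
proof -
  have neg_A: "uminus -` A \<in> sets borel"
    by (rule measurable_sets_borel[OF _ A]) (auto intro!: borel_measurable_continuous_onI continuous_intros)
  have "(\<integral>\<^sup>+y. indicator A x * indicator B (x + y) \<partial>N) = indicator A x * emeasure N B" for x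
  proof -
    have "(\<integral>\<^sup>+y. indicator B (x + y) \<partial>N) = emeasure N B"
      using B sN by (simp add: nn_integral_translation_invariant[OF sN tN])
    then show ?thesis
      using B by (subst nn_integral_cmult) (auto simp: measurable_cong_sets[OF sN refl])
  qed
  moreover have "(\<integral>\<^sup>+y. indicator A (- y + x) * indicator B x \<partial>N) = indicator B x * emeasure N (uminus -` A)"
    for x
  proof -
    have "(\<integral>\<^sup>+y. indicator A (- y + x) \<partial>N) = (\<integral>\<^sup>+y. indicator (uminus -` A) (- x + y) \<partial>N)"
      by (auto intro!: nn_integral_cong simp: indicator_def algebra_simps)
    also have "\<dots> = (\<integral>\<^sup>+y. indicator (uminus -` A) y \<partial>N)"
      by (rule nn_integral_translation_invariant[OF sN tN]) (use neg_A in measurable)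
    also have "\<dots> = emeasure N (uminus -` A)"
      using neg_A sN by simp
    finally show ?thesis
      using A by (subst nn_integral_multc) (auto simp: mult.commute measurable_cong_sets[OF sN refl])
  qed
  moreover have "(\<integral>\<^sup>+x. (\<integral>\<^sup>+y. indicator A x * indicator B (x + y) \<partial>N) \<partial>M) =
      (\<integral>\<^sup>+x. (\<integral>\<^sup>+y. indicator A (- y + x) * indicator B x \<partial>N) \<partial>M)"
    by (rule nn_integral_translation_swap[OF sM sN sf tM]) (use A B in measurable)
  ultimately show ?thesis
    using A B sM by (simp add: nn_integral_multc mult.commute)
qed

lemma sigma_finite_measure_finite_on_balls:
  fixes M :: "'a::real_normed_vector measure"
  assumes sM: "sets M = sets borel" and fin: "\<And>r. emeasure M (ball 0 r) \<noteq> \<infinity>"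
  shows "sigma_finite_measure M"
proof
  have "\<Union> (range (\<lambda>n::nat. ball (0::'a) (real n))) = UNIV"
    by (auto simp: reals_Archimedean2)
  then show "\<exists>A. countable A \<and> A \<subseteq> sets M \<and> \<Union> A = space M \<and> (\<forall>a\<in>A. emeasure M a \<noteq> \<infinity>)"
    using sets_eq_imp_space_eq[OF sM] fin
    by (intro exI[of _ "range (\<lambda>n::nat. ball 0 (real n))"]) (auto simp: sM)
qed

text \<open>With \<open>B\<close> the unit ball, the product identity for \<open>(lborel, lborel)\<close> shows that \<open>lborel\<close> is
  symmetric, and the one for \<open>(M, lborel)\<close> then gives \<open>M A = lborel (uminus -` A) = lborel A\<close>.\<close>

lemma translation_invariant_eq_lborel:
  fixes M :: "'a::euclidean_space measure"
  assumes sM: "sets M = sets borel" and tM: "\<And>c. distr M borel ((+) c) = M"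
    and balls: "\<And>r. emeasure M (ball 0 r) = emeasure lborel (ball (0::'a) r)"
  shows "M = lborel"
proof (rule measure_eqI)
  fix A assume "A \<in> sets M"
  then have A: "A \<in> sets borel" using sM by simp
  have "emeasure M (ball 0 r) \<noteq> \<infinity>" for r
    using emeasure_lborel_ball_finite[of "0::'a" r] balls[of r] by simp
  then have "sigma_finite_measure M"
    by (rule sigma_finite_measure_finite_on_balls[OF sM])
  define B :: "'a set" where "B = ball 0 1"
  obtain v where v: "emeasure lborel B = ennreal v" "v > 0"
    using emeasure_ball[of 1 "0::'a"] unit_ball_vol_pos[of "real DIM('a)"] by (auto simp: B_def)
  have "emeasure lborel A * ennreal v = emeasure lborel (uminus -` A) * ennreal v"
    using translation_invariant_emeasure_mult[OF _ _ sigma_finite_lborel sigma_finite_lborel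
        lborel_distr_plus lborel_distr_plus A, of B] v(1)
    by (simp add: B_def mult.commute)
  moreover have "emeasure M A * ennreal v = emeasure lborel (uminus -` A) * ennreal v"
    using translation_invariant_emeasure_mult[OF sM _ \<open>sigma_finite_measure M\<close> sigma_finite_lborel
        tM lborel_distr_plus A, of B] v(1) balls[of 1]
    by (simp add: B_def mult.commute)
  ultimately show "emeasure M A = emeasure lborel A"
    using v(2) by (simp add: mult_right_ennreal_cancel)
qed (simp add: sM)

lemma distr_lborel_linear_isometry:
  fixes L :: "'a::euclidean_space \<Rightarrow> 'a"
  assumes lin: "linear L" and surj: "surj L" and norm_L: "\<And>x. norm (L x) = norm x"
  shows "distr lborel borel L = lborel"
proof (rule translation_invariant_eq_lborel)
  have L: "L \<in> borel \<rightarrow>\<^sub>M borel"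
    using lin by (intro borel_measurable_continuous_onI) (simp add: linear_continuous_on linear_linear)
  show "distr (distr lborel borel L) borel ((+) c) = distr lborel borel L" for c
  proof -
    obtain c' where c': "c = L c'" using surj by (metis surjD)
    have "(+) c \<circ> L = L \<circ> (+) c'"
      by (auto simp: c' linear_add[OF lin])
    then have "distr (distr lborel borel L) borel ((+) c) = distr (distr lborel borel ((+) c')) borel L"
      using L by (simp add: distr_distr)
    then show ?thesis
      by (simp add: lborel_distr_plus)
  qed
  show "emeasure (distr lborel borel L) (ball 0 r) = emeasure lborel (ball (0::'a) r)" for r
  proof -
    have "L -` ball 0 r = ball 0 r"
      by (auto simp: norm_L)
    then show ?thesis
      using L by (simp add: emeasure_distr)
  qed
qed simp

section \<open>Gram--Schmidt orthonormalisation\<close>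

lemma matrix_vector_mult_scalar_mult: "A *v (c *s v) = c *s (A *v (v :: 'a::comm_ring_1^'n))"
  by (simp add: vec_eq_iff matrix_vector_mult_def sum_distrib_left mult_ac)

lemma matrix_vector_mult_scaleR: "A *v (c *\<^sub>R v) = c *\<^sub>R (A *v (v :: complex^'n))"
  using matrix_vector_mul_linear[of A] by (simp add: linear_scale)

lemma matrix_vector_mult_sum: "A *v (\<Sum>j\<in>S. f j) = (\<Sum>j\<in>S. A *v (f j :: 'a::comm_ring_1^'n))"
  by (induction S rule: infinite_finite_induct) (simp_all add: matrix_vector_right_distrib)

lemma sgn_unitary_mult: "A \<in> unitary_group \<Longrightarrow> sgn (A *v r) = A *v sgn r"
  by (simp add: sgn_vec_def norm_unitary_mult matrix_vector_mult_scaleR)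

lemma cinner_sgn_self: "r \<noteq> 0 \<Longrightarrow> cinner (sgn r) (sgn r) = 1"
  by (simp add: cinner_self_eq_norm_square norm_sgn)

lemma continuous_on_cinner [continuous_intros]:
  "continuous_on S f \<Longrightarrow> continuous_on S g \<Longrightarrow> continuous_on S (\<lambda>z. cinner (f z) (g z))"
  unfolding cinner_def by (intro continuous_intros)

lemma continuous_on_scalar_mult [continuous_intros]:
  "continuous_on S f \<Longrightarrow> continuous_on S g \<Longrightarrow> continuous_on S (\<lambda>z. f z *s (g z :: complex^'n))"
  unfolding vector_scalar_mult_def by (intro continuous_intros)

definition gs_residual :: "(nat \<Rightarrow> complex^'n) \<Rightarrow> complex^'n \<Rightarrow> nat \<Rightarrow> complex^'n" where
  "gs_residual Q y k = y - (\<Sum>j<k. cinner y (Q j) *s Q j)"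

text \<open>\<open>gram_schmidt x k j\<close> is the \<open>j\<close>-th vector obtained from \<open>x 0, \<dots>, x (k - 1)\<close>.  A vanishing
  residual yields \<open>sgn 0 = 0\<close>, so the result is only meaningful under \<open>gs_nondegenerate x k\<close>.\<close>

primrec gram_schmidt :: "(nat \<Rightarrow> complex^'n) \<Rightarrow> nat \<Rightarrow> nat \<Rightarrow> complex^'n" where
  "gram_schmidt x 0 = (\<lambda>_. 0)"
| "gram_schmidt x (Suc k) = (gram_schmidt x k)(k := sgn (gs_residual (gram_schmidt x k) (x k) k))"

definition gs_nondegenerate :: "(nat \<Rightarrow> complex^'n) \<Rightarrow> nat \<Rightarrow> bool" where
  "gs_nondegenerate x K \<longleftrightarrow> (\<forall>k<K. gs_residual (gram_schmidt x k) (x k) k \<noteq> 0)"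

lemma gs_nondegenerate_0 [simp]: "gs_nondegenerate x 0"
  by (simp add: gs_nondegenerate_def)

lemma gs_nondegenerate_Suc:
  "gs_nondegenerate x (Suc K) \<longleftrightarrow> gs_nondegenerate x K \<and> gs_residual (gram_schmidt x K) (x K) K \<noteq> 0"
  by (auto simp: gs_nondegenerate_def less_Suc_eq)

lemma gs_residual_unitary_mult:
  assumes "A \<in> unitary_group"
  shows "gs_residual (\<lambda>j. A *v Q j) (A *v y) k = A *v gs_residual Q y k"
  by (simp add: gs_residual_def cinner_unitary_mult[OF assms] matrix_vector_mult_diff_distrib
      matrix_vector_mult_sum matrix_vector_mult_scalar_mult)

lemma gram_schmidt_unitary_mult:
  assumes "A \<in> unitary_group"
  shows "gram_schmidt (\<lambda>k. A *v x k) K = (\<lambda>j. A *v gram_schmidt x K j)"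
  by (induction K) (auto simp: gs_residual_unitary_mult[OF assms] sgn_unitary_mult[OF assms])

lemma gs_nondegenerate_unitary_mult:
  assumes "A \<in> unitary_group"
  shows "gs_nondegenerate (\<lambda>k. A *v x k) K \<longleftrightarrow> gs_nondegenerate x K"
proof -
  have "A *v v = 0 \<longleftrightarrow> v = 0" for v
    by (metis norm_eq_zero norm_unitary_mult[OF assms])
  then show ?thesis
    by (simp add: gs_nondegenerate_def gram_schmidt_unitary_mult[OF assms]
        gs_residual_unitary_mult[OF assms])
qed

lemma gram_schmidt_orthonormal:
  assumes "gs_nondegenerate x K" "i < K" "j < K"
  shows "cinner (gram_schmidt x K i) (gram_schmidt x K j) = (if i = j then 1 else 0)"
  using assms
proof (induction K arbitrary: i j)
  case (Suc K)
  define Q where "Q = gram_schmidt x K"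
  define r where "r = gs_residual Q (x K) K"
  have nondeg: "gs_nondegenerate x K" and "r \<noteq> 0"
    using Suc.prems(1) by (auto simp: gs_nondegenerate_Suc r_def Q_def)
  have IH: "i < K \<Longrightarrow> j < K \<Longrightarrow> cinner (Q i) (Q j) = (if i = j then 1 else 0)" for i j
    using Suc.IH[OF nondeg] by (simp add: Q_def)
  have "cinner r (Q i) = 0" if "i < K" for i
  proof -
    have "(\<Sum>j<K. cinner (x K) (Q j) * cinner (Q j) (Q i)) = (\<Sum>j<K. if j = i then cinner (x K) (Q i) else 0)"
      by (rule sum.cong) (auto simp: IH that)
    then show ?thesis
      using that by (simp add: r_def gs_residual_def cinner_diff_left cinner_sum_left cinner_scalar_mult_left)
  qed
  then have orth: "cinner (sgn r) (Q i) = 0" "cinner (Q i) (sgn r) = 0" if "i < K" for i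
    using that by (simp_all add: sgn_vec_def cinner_scaleR_left cinner_commute[of "Q i"])
  have "gram_schmidt x (Suc K) = Q(K := sgn r)"
    by (simp add: Q_def r_def)
  then show ?case
    using Suc.prems \<open>r \<noteq> 0\<close> IH orth by (auto simp: cinner_sgn_self less_Suc_eq)
qed simp

lemma gram_schmidt_support:
  assumes "\<And>k i. i \<notin> B \<Longrightarrow> x k $ i = 0" and "i \<notin> B"
  shows "gram_schmidt x K j $ i = 0"
proof (induction K arbitrary: j)
  case (Suc K)
  have "gs_residual (gram_schmidt x K) (x K) K $ i = 0"
    using assms Suc.IH by (simp add: gs_residual_def sum_component)
  then show ?case
    using Suc.IH by (simp add: sgn_vec_def)
qed simp

lemma gs_nondegenerate_if_orthonormal:
  assumes orthonormal: "\<And>i j. i < K \<Longrightarrow> j < K \<Longrightarrow> cinner (x i) (x j) = (if i = j then 1 else 0)"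
  shows "gs_nondegenerate x K"
proof -
  have "k \<le> K \<Longrightarrow> gs_nondegenerate x k \<and> (\<forall>j<k. gram_schmidt x k j = x j)" for k
  proof (induction k)
    case (Suc k)
    then have "k < K" "gs_nondegenerate x k" and IH: "\<And>j. j < k \<Longrightarrow> gram_schmidt x k j = x j"
      by auto
    have "gs_residual (gram_schmidt x k) (x k) k = x k"
      using IH orthonormal \<open>k < K\<close> by (simp add: gs_residual_def)
    moreover have "cinner (x k) (x k) = 1"
      using orthonormal \<open>k < K\<close> by simp
    then have "(norm (x k))\<^sup>2 = 1\<^sup>2"
      by (simp add: cinner_self_eq_norm_square del: of_real_power)
    then have "norm (x k) = 1"
      by (simp add: power2_eq_iff_nonneg del: power_one)
    ultimately show ?case
      using Suc.prems \<open>gs_nondegenerate x k\<close> IH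
      by (auto simp: gs_nondegenerate_Suc less_Suc_eq sgn_vec_def)
  qed simp
  then show ?thesis by blast
qed

lemma gram_schmidt_continuous:
  fixes x :: "'z::topological_space \<Rightarrow> nat \<Rightarrow> complex^'n"
  assumes x: "\<And>k. continuous_on UNIV (\<lambda>z. x z k)"
  shows "open {z. gs_nondegenerate (x z) K} \<and>
    (\<forall>j. continuous_on {z. gs_nondegenerate (x z) K} (\<lambda>z. gram_schmidt (x z) K j))"
proof (induction K)
  case (Suc K)
  define S where "S = {z. gs_nondegenerate (x z) K}"
  define R where "R = (\<lambda>z. gs_residual (gram_schmidt (x z) K) (x z K) K)"
  have "open S" and Q: "\<And>j. continuous_on S (\<lambda>z. gram_schmidt (x z) K j)"
    using Suc by (auto simp: S_def)
  have "continuous_on S R"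
    unfolding R_def gs_residual_def
    by (intro continuous_intros Q continuous_on_subset[OF x] subset_UNIV)
  have S': "{z. gs_nondegenerate (x z) (Suc K)} = S \<inter> R -` (- {0})"
    by (auto simp: S_def R_def gs_nondegenerate_Suc)
  have "continuous_on {z. gs_nondegenerate (x z) (Suc K)} (\<lambda>z. gram_schmidt (x z) (Suc K) j)" for j
  proof (cases "j = K")
    case True
    have "continuous_on (S \<inter> R -` (- {0})) (\<lambda>z. sgn (R z))"
      by (rule continuous_on_sgn) (auto intro: continuous_on_subset[OF \<open>continuous_on S R\<close>])
    then show ?thesis
      using True by (simp add: S' R_def)
  next
    case False
    then show ?thesis
      unfolding S' by (simp add: continuous_on_subset[OF Q])
  qed
  moreover have "open {z. gs_nondegenerate (x z) (Suc K)}"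
    unfolding S' using continuous_on_open_vimage[OF \<open>open S\<close>] \<open>continuous_on S R\<close>
    by (metis inf_commute open_Compl closed_singleton)
  ultimately show ?case by blast
qed (simp add: continuous_on_const)

section \<open>The unitary factor of a QR decomposition\<close>

definition list_index :: "'a list \<Rightarrow> 'a \<Rightarrow> nat" where
  "list_index xs x = inv_into {..<length xs} ((!) xs) x"

lemma
  assumes "distinct xs" "x \<in> set xs"
  shows list_index_less: "list_index xs x < length xs"
    and nth_list_index: "xs ! list_index xs x = x"
proof -
  have "bij_betw ((!) xs) {..<length xs} (set xs)"
    by (rule bij_betw_nth[OF assms(1)]) auto
  then show "list_index xs x < length xs" "xs ! list_index xs x = x"
    unfolding list_index_def using assms(2)
    by (metis bij_betw_def inv_into_into lessThan_iff, metis bij_betw_inv_into_right)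
qed

lemma list_index_inj:
  "distinct xs \<Longrightarrow> x \<in> set xs \<Longrightarrow> y \<in> set xs \<Longrightarrow> list_index xs x = list_index xs y \<Longrightarrow> x = y"
  by (metis nth_list_index)

lemma unitary_sub_mult_restrict:
  assumes A: "A \<in> unitary_sub B"
  shows "(\<chi> i. if i \<in> B then (A *v c) $ i else 0) = A *v (\<chi> i. if i \<in> B then c $ i else 0)"
proof -
  have A_out: "A $ i $ l = (if i = l then 1 else 0)" if "i \<notin> B \<or> l \<notin> B" for i l
    using unitary_sub_nth_outside[OF A that] .
  have "(A *v c) $ i = (A *v (\<chi> i. if i \<in> B then c $ i else 0)) $ i" if "i \<in> B" for i
    unfolding matrix_vector_mult_def using that A_out by (auto intro!: sum.cong)
  moreover have "(A *v (\<chi> i. if i \<in> B then c $ i else 0)) $ i = 0" if "i \<notin> B" for i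
    unfolding matrix_vector_mult_def using that A_out by (auto intro!: sum.neutral)
  ultimately show ?thesis
    by (auto simp: vec_eq_iff)
qed

text \<open>For an enumeration \<open>bs\<close> of \<open>B\<close>, \<open>qr_unitary bs Z\<close> orthonormalises the columns of the
  \<open>B \<times> B\<close> block of \<open>Z\<close> and is the identity outside that block.\<close>

definition block_column :: "'n list \<Rightarrow> complex^'n^'n \<Rightarrow> nat \<Rightarrow> complex^'n" where
  "block_column bs Z k =
    (if k < length bs then (\<chi> i. if i \<in> set bs then Z $ i $ (bs ! k) else 0) else 0)"

definition qr_domain :: "'n list \<Rightarrow> (complex^'n^'n) set" where
  "qr_domain bs = {Z. gs_nondegenerate (block_column bs Z) (length bs)}"

definition qr_unitary :: "'n list \<Rightarrow> complex^'n^'n \<Rightarrow> complex^'n^'n" where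
  "qr_unitary bs Z = (\<chi> i j. if j \<in> set bs
      then gram_schmidt (block_column bs Z) (length bs) (list_index bs j) $ i
      else axis j 1 $ i)"

lemma column_qr_unitary:
  "column j (qr_unitary bs Z) =
    (if j \<in> set bs then gram_schmidt (block_column bs Z) (length bs) (list_index bs j) else axis j 1)"
  by (simp add: column_def qr_unitary_def vec_eq_iff)

lemma block_column_unitary_sub_mult:
  assumes "A \<in> unitary_sub (set bs)"
  shows "block_column bs (A ** Z) = (\<lambda>k. A *v block_column bs Z k)"
proof -
  have "block_column bs (A ** Z) k = A *v block_column bs Z k" for k
  proof (cases "k < length bs")
    case True
    have "(\<chi> i. if i \<in> set bs then (A ** Z) $ i $ (bs ! k) else 0) =
        (\<chi> i. if i \<in> set bs then (A *v column (bs ! k) Z) $ i else 0)"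
      by (simp only: column_matrix_mult[symmetric]) (simp add: column_def cong: if_cong)
    also have "\<dots> = A *v (\<chi> i. if i \<in> set bs then column (bs ! k) Z $ i else 0)"
      by (rule unitary_sub_mult_restrict[OF assms])
    finally show ?thesis
      using True by (simp add: block_column_def column_def cong: if_cong)
  qed (simp add: block_column_def)
  then show ?thesis ..
qed

lemma qr_domain_unitary_sub_mult:
  assumes "A \<in> unitary_sub (set bs)"
  shows "A ** Z \<in> qr_domain bs \<longleftrightarrow> Z \<in> qr_domain bs"
proof -
  have "A \<in> unitary_group"
    using assms unitary_sub_subset by auto
  then show ?thesis
    by (simp add: qr_domain_def block_column_unitary_sub_mult[OF assms] gs_nondegenerate_unitary_mult)
qed

lemma qr_unitary_unitary_sub_mult:
  assumes A: "A \<in> unitary_sub (set bs)"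
  shows "qr_unitary bs (A ** Z) = A ** qr_unitary bs Z"
proof -
  have "A \<in> unitary_group"
    using A unitary_sub_subset by auto
  then have "column j (qr_unitary bs (A ** Z)) = column j (A ** qr_unitary bs Z)" for j
    using unitary_sub_mult_axis[OF A]
    by (simp add: column_qr_unitary column_matrix_mult block_column_unitary_sub_mult[OF A]
        gram_schmidt_unitary_mult)
  then show ?thesis
    by (simp add: vec_eq_iff column_def)
qed

lemma qr_unitary_in_unitary_sub:
  assumes bs: "distinct bs" and Z: "Z \<in> qr_domain bs"
  shows "qr_unitary bs Z \<in> unitary_sub (set bs)"
proof -
  define Q where "Q = gram_schmidt (block_column bs Z) (length bs)"
  have orthonormal: "i < length bs \<Longrightarrow> j < length bs \<Longrightarrow> cinner (Q i) (Q j) = (if i = j then 1 else 0)"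
    for i j unfolding Q_def by (rule gram_schmidt_orthonormal) (use Z in \<open>simp_all add: qr_domain_def\<close>)
  have support: "i \<notin> set bs \<Longrightarrow> Q k $ i = 0" for i k
    unfolding Q_def by (rule gram_schmidt_support) (auto simp: block_column_def)
  have column: "column j (qr_unitary bs Z) = (if j \<in> set bs then Q (list_index bs j) else axis j 1)" for j
    by (simp add: column_qr_unitary Q_def)
  have "cinner (column j (qr_unitary bs Z)) (column i (qr_unitary bs Z)) = (if i = j then 1 else 0)" for i j
    using list_index_less[OF bs] list_index_inj[OF bs, of i j] support
    by (cases "i \<in> set bs"; cases "j \<in> set bs")
      (auto simp: column orthonormal cinner_axis_left cinner_axis_right cinner_axis_axis axis_nth_if)
  then have left: "conj_transpose (qr_unitary bs Z) ** qr_unitary bs Z = mat 1"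
    by (simp add: vec_eq_iff conj_transpose_mult_self_nth mat_def)
  have "qr_unitary bs Z $ i $ j = (if i = j then 1 else 0)" if "i \<notin> set bs \<or> j \<notin> set bs" for i j
    using that support by (auto simp: qr_unitary_def Q_def axis_def)
  then show ?thesis
    using left matrix_left_right_inverse by (auto simp: unitary_sub_def unitary_group_def)
qed

lemma mat_1_in_qr_domain:
  assumes "distinct bs"
  shows "mat 1 \<in> qr_domain bs"
proof -
  have "block_column bs (mat 1) k = axis (bs ! k) 1" if "k < length bs" for k
    using that by (auto simp: block_column_def mat_def axis_def vec_eq_iff)
  then have "cinner (block_column bs (mat 1) i) (block_column bs (mat 1) j) = (if i = j then 1 else 0)"
    if "i < length bs" "j < length bs" for i j
    using that assms by (simp add: cinner_axis_axis nth_eq_iff_index_eq)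
  then show ?thesis
    unfolding qr_domain_def mem_Collect_eq by (rule gs_nondegenerate_if_orthonormal)
qed

lemma
  shows open_qr_domain: "open (qr_domain bs)"
    and continuous_on_qr_unitary: "continuous_on (qr_domain bs) (qr_unitary bs)"
proof -
  have "continuous_on UNIV (\<lambda>Z. if i \<in> set bs then Z $ i $ (bs ! k) else 0)" for i k
    by (cases "i \<in> set bs") (simp_all add: continuous_intros)
  then have "continuous_on UNIV (\<lambda>Z. block_column bs Z k)" for k
    unfolding block_column_def
    by (cases "k < length bs") (auto intro!: continuous_on_vec_lambda simp: continuous_on_const)
  note gs = gram_schmidt_continuous[of "block_column bs", OF this, of "length bs"]
  then show "open (qr_domain bs)"
    by (simp add: qr_domain_def)
  have "continuous_on (qr_domain bs) (\<lambda>Z. qr_unitary bs Z $ i $ j)" for i j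
    using gs by (cases "j \<in> set bs") (simp_all add: qr_unitary_def qr_domain_def continuous_intros)
  then have "continuous_on (qr_domain bs) (\<lambda>Z. \<chi> i j. qr_unitary bs Z $ i $ j)"
    by (intro continuous_on_vec_lambda)
  then show "continuous_on (qr_domain bs) (qr_unitary bs)"
    by (simp add: vec_lambda_eta)
qed

section \<open>Existence of the Haar measure of \<open>U_B\<close>\<close>

lemma emeasure_lborel_open_neq_0:
  fixes S :: "'a::euclidean_space set"
  assumes "open S" "x \<in> S"
  shows "emeasure lborel S \<noteq> 0"
proof -
  obtain e where "e > 0" "ball x e \<subseteq> S"
    using assms open_contains_ball by blast
  then have "emeasure lborel (ball x e) \<le> emeasure lborel S"
    using assms(1) by (intro emeasure_mono) auto
  moreover have "0 < emeasure lborel (ball x e)"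
    using \<open>e > 0\<close> unit_ball_vol_pos by (simp add: emeasure_ball)
  ultimately show ?thesis by auto
qed

lemma distr_uniform_measure_lborel:
  fixes L :: "'a::euclidean_space \<Rightarrow> 'a"
  assumes L: "L \<in> borel \<rightarrow>\<^sub>M borel" "distr lborel borel L = lborel"
    and K: "K \<in> sets borel" "L -` K = K"
  shows "distr (uniform_measure lborel K) borel L = uniform_measure lborel K"
proof (rule measure_eqI)
  fix E assume "E \<in> sets (distr (uniform_measure lborel K) borel L)"
  then have E: "E \<in> sets borel" by simp
  have "emeasure (distr (uniform_measure lborel K) borel L) E = emeasure lborel (K \<inter> L -` E) / emeasure lborel K"
    using L(1) E K(1) measurable_sets_borel[OF L(1) E] by (simp add: emeasure_distr)
  also have "K \<inter> L -` E = L -` (K \<inter> E)"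
    using K(2) by auto
  also have "emeasure lborel (L -` (K \<inter> E)) = emeasure lborel (K \<inter> E)"
    using emeasure_distr[of L lborel borel "K \<inter> E"] L K(1) E by simp
  finally show "emeasure (distr (uniform_measure lborel K) borel L) E = emeasure (uniform_measure lborel K) E"
    using E K(1) by simp
qed simp

lemma distr_distr_equivariant:
  assumes N: "sets N = sets borel" "distr N borel L = N"
    and [measurable]: "L \<in> borel \<rightarrow>\<^sub>M borel" "Q \<in> borel \<rightarrow>\<^sub>M borel" "L' \<in> borel \<rightarrow>\<^sub>M borel"
    and equivariant: "AE x in N. Q (L x) = L' (Q x)"
  shows "distr (distr N borel Q) borel L' = distr N borel Q"
proof -
  have [measurable]: "L \<in> N \<rightarrow>\<^sub>M borel" "Q \<in> N \<rightarrow>\<^sub>M borel"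
    by (simp_all add: measurable_cong_sets[OF N(1) refl])
  have "distr (distr N borel Q) borel L' = distr N borel (L' \<circ> Q)"
    by (simp add: distr_distr)
  also have "\<dots> = distr N borel (Q \<circ> L)"
    using equivariant by (intro distr_cong_AE) auto
  also have "\<dots> = distr (distr N borel L) borel Q"
    by (simp add: distr_distr)
  finally show ?thesis
    by (simp add: N(2))
qed

lemma is_haar_distr_equivariant:
  fixes \<nu> :: "(complex^'n^'n) measure"
  assumes G: "G \<in> sets borel"
    and \<nu>: "prob_space \<nu>" "sets \<nu> = sets borel"
    and Q [measurable]: "Q \<in> borel \<rightarrow>\<^sub>M borel" and Q_G: "AE Z in \<nu>. Q Z \<in> G"
    and invariant: "\<And>A. A \<in> G \<Longrightarrow> distr \<nu> borel (\<lambda>Z. A ** Z) = \<nu>"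
    and equivariant: "\<And>A. A \<in> G \<Longrightarrow> AE Z in \<nu>. Q (A ** Z) = A ** Q Z"
  shows "is_haar G (distr \<nu> borel Q)"
  unfolding is_haar_def
proof (intro conjI ballI)
  have Q_\<nu>: "Q \<in> \<nu> \<rightarrow>\<^sub>M borel"
    by (simp add: measurable_cong_sets[OF \<nu>(2) refl])
  show "prob_space (distr \<nu> borel Q)"
    by (rule prob_space.prob_space_distr[OF \<nu>(1) Q_\<nu>])
  have "AE Z in distr \<nu> borel Q. Z \<in> G"
    using Q_G G by (subst AE_distr_iff) (auto simp: Q_\<nu>)
  then show "emeasure (distr \<nu> borel Q) G = 1"
    using G by (intro prob_space.emeasure_eq_1_AE[OF \<open>prob_space (distr \<nu> borel Q)\<close>]) auto
  show "distr (distr \<nu> borel Q) borel (\<lambda>X. A ** X) = distr \<nu> borel Q" if "A \<in> G" for A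
    using distr_distr_equivariant[OF \<nu>(2) invariant[OF that] _ Q _ equivariant[OF that]]
    by (simp add: borel_measurable_matrix_mult_left)
qed simp

lemma distr_lborel_unitary_mult:
  assumes "A \<in> unitary_group"
  shows "distr lborel borel (\<lambda>Z::complex^'n^'n. A ** Z) = lborel"
  using assms
  by (intro distr_lborel_linear_isometry linear_matrix_mult_left surj_unitary_mult norm_unitary_mult_matrix)

lemma is_haar_unitary_sub_exists:
  fixes B :: "'n::finite set"
  shows "\<exists>M. is_haar (unitary_sub B) M"
proof -
  obtain bs where bs: "set bs = B" "distinct bs"
    using finite_distinct_list[of B] by auto
  define K where "K = qr_domain bs \<inter> ball 0 (norm (mat 1 :: complex^'n^'n) + 1)"
  define Q where "Q = (\<lambda>Z. if Z \<in> qr_domain bs then qr_unitary bs Z else mat 1)"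
  have K: "K \<in> sets borel" "open K"
    by (simp_all add: K_def open_qr_domain open_Int)
  have "emeasure lborel K \<noteq> 0"
    using K(2) mat_1_in_qr_domain[OF bs(2)] by (intro emeasure_lborel_open_neq_0) (auto simp: K_def)
  moreover have "emeasure lborel K \<noteq> \<infinity>"
    using emeasure_bounded_finite[of K] by (simp add: K_def bounded_Int)
  ultimately have "prob_space (uniform_measure lborel K)"
    by (rule prob_space_uniform_measure)
  have AE_K: "AE Z in uniform_measure lborel K. Z \<in> K"
    by (rule AE_uniform_measureI) (use K in auto)
  have "is_haar (unitary_sub B) (distr (uniform_measure lborel K) borel Q)"
  proof (rule is_haar_distr_equivariant)
    show "Q \<in> borel \<rightarrow>\<^sub>M borel"
      unfolding Q_def
      by (rule borel_measurable_continuous_on_if) (simp_all add: open_qr_domain continuous_on_qr_unitary)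
    show "AE Z in uniform_measure lborel K. Q Z \<in> unitary_sub B"
      using AE_K by eventually_elim (use qr_unitary_in_unitary_sub[OF bs(2)] bs(1) in \<open>auto simp: K_def Q_def\<close>)
    fix A assume "A \<in> unitary_sub B"
    then have A: "A \<in> unitary_sub (set bs)" "A \<in> unitary_group"
      using bs(1) unitary_sub_subset by auto
    have "(\<lambda>Z. A ** Z) -` K = K"
      using qr_domain_unitary_sub_mult[OF A(1)] norm_unitary_mult_matrix[OF A(2), where 'p='n] by (auto simp: K_def)
    then show "distr (uniform_measure lborel K) borel (\<lambda>Z. A ** Z) = uniform_measure lborel K"
      using K(1) distr_lborel_unitary_mult[OF A(2)] by (intro distr_uniform_measure_lborel) auto
    show "AE Z in uniform_measure lborel K. Q (A ** Z) = A ** Q Z"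
      using AE_K by eventually_elim
        (simp add: K_def Q_def qr_domain_unitary_sub_mult[OF A(1)] qr_unitary_unitary_sub_mult[OF A(1)])
  qed (use \<open>prob_space (uniform_measure lborel K)\<close> borel_closed[OF closed_unitary_sub] in auto)
  then show ?thesis ..
qed

lemma haar_measure_unitary_sub: "is_haar (unitary_sub B) (haar_measure (unitary_sub B))"
proof -
  obtain M where "is_haar (unitary_sub B) M"
    using is_haar_unitary_sub_exists by blast
  then show ?thesis
    using haar_measure_is_haar borel_closed[OF closed_unitary_sub] unitary_sub_conj_transpose by blast
qed

section \<open>Torus-invariant vectors\<close>

definition diag_matrix :: "('n \<Rightarrow> complex) \<Rightarrow> complex^'n^'n" where
  "diag_matrix d = (\<chi> i j. if i = j then d i else 0)"

lemma diag_matrix_nth [simp]: "diag_matrix d $ i $ j = (if i = j then d i else 0)"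
  by (simp add: diag_matrix_def)

lemma diag_matrix_mult_nth: "(diag_matrix d ** X) $ i $ j = d i * X $ i $ j"
  by (simp add: matrix_matrix_mult_def if_distrib[of "\<lambda>x. x * _"] cong: if_cong)

lemma mult_diag_matrix_nth: "(X ** diag_matrix d) $ i $ j = X $ i $ j * d j"
  by (simp add: matrix_matrix_mult_def if_distrib[of "\<lambda>x. _ * x"] cong: if_cong)

lemma diag_matrix_unitary:
  assumes "\<And>i. d i * cnj (d i) = 1"
  shows "diag_matrix d \<in> unitary_group"
proof -
  have ct: "conj_transpose (diag_matrix d) = diag_matrix (\<lambda>i. cnj (d i))"
    by (simp add: vec_eq_iff)
  show ?thesis
    using assms by (simp add: unitary_group_def ct vec_eq_iff diag_matrix_mult_nth mat_def mult.commute)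
qed

lemma torus_eq_diag_matrix:
  assumes "t \<in> torus"
  shows "t = diag_matrix (\<lambda>i. t $ i $ i)" "t $ i $ i * cnj (t $ i $ i) = 1"
proof -
  show t: "t = diag_matrix (\<lambda>i. t $ i $ i)"
    using assms by (auto simp: torus_def vec_eq_iff)
  have "(t ** conj_transpose t) $ i $ i = 1"
    using assms by (simp add: torus_def unitary_group_def mat_def)
  then show "t $ i $ i * cnj (t $ i $ i) = 1"
    by (subst (asm) (1) t) (simp add: diag_matrix_mult_nth)
qed

lemma torus_factor:
  assumes t: "t \<in> torus"
  obtains tB tO where "tB \<in> unitary_sub B" "tO \<in> torus"
    "\<And>X. X \<in> unitary_sub B \<Longrightarrow> t ** X = tB ** X ** tO"
proof
  define dB where "dB = (\<lambda>i. if i \<in> B then t $ i $ i else 1)"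
  define dO where "dO = (\<lambda>i. if i \<in> B then 1 else t $ i $ i)"
  have "diag_matrix dB \<in> unitary_group" "diag_matrix dO \<in> unitary_group"
    by (simp_all add: diag_matrix_unitary dB_def dO_def torus_eq_diag_matrix(2)[OF t])
  then show "diag_matrix dB \<in> unitary_sub B" "diag_matrix dO \<in> torus"
    by (auto simp: unitary_sub_def torus_def dB_def dO_def)
  fix X assume X: "X \<in> unitary_sub B"
  have "(t ** X) $ i $ j = (diag_matrix dB ** X ** diag_matrix dO) $ i $ j" for i j
  proof -
    have "(t ** X) $ i $ j = t $ i $ i * X $ i $ j"
      by (subst torus_eq_diag_matrix(1)[OF t]) (simp add: diag_matrix_mult_nth)
    then show ?thesis
      using unitary_sub_nth_outside[OF X, of i j]
      by (cases "i \<in> B"; cases "j \<in> B") (auto simp: diag_matrix_mult_nth mult_diag_matrix_nth dB_def dO_def)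
  qed
  then show "t ** X = diag_matrix dB ** X ** diag_matrix dO"
    by (simp add: vec_eq_iff)
qed

lemma rep_torus_mult_TorInv:
  assumes rep: "is_rep \<rho>" and v: "v \<in> TorInv \<rho>" and t: "t \<in> torus"
  obtains tB where "tB \<in> unitary_sub B"
    "\<And>X. X \<in> unitary_sub B \<Longrightarrow> \<rho> t *v (\<rho> X *v v) = \<rho> (tB ** X) *v v"
proof -
  obtain tB tO where tB: "tB \<in> unitary_sub B" and tO: "tO \<in> torus"
    and factor: "\<And>X. X \<in> unitary_sub B \<Longrightarrow> t ** X = tB ** X ** tO"
    using torus_factor[OF t] by metis
  have unitary: "t \<in> unitary_group" "tB \<in> unitary_group" "tO \<in> unitary_group"
    using t tB tO unitary_sub_subset by (auto simp: torus_def)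
  have hom: "\<rho> (A ** C) = \<rho> A ** \<rho> C" if "A \<in> unitary_group" "C \<in> unitary_group" for A C
    using rep that by (simp add: is_rep_def)
  have "\<rho> t *v (\<rho> X *v v) = \<rho> (tB ** X) *v v" if X: "X \<in> unitary_sub B" for X
  proof -
    have "X \<in> unitary_group"
      using X unitary_sub_subset by auto
    then have "\<rho> t *v (\<rho> X *v v) = \<rho> (t ** X) *v v"
      using unitary by (simp add: matrix_vector_mul_assoc hom)
    also have "\<dots> = \<rho> (tB ** X) *v (\<rho> tO *v v)"
      using unitary \<open>X \<in> unitary_group\<close>
      by (simp add: factor[OF X] matrix_vector_mul_assoc hom unitary_group_mult)
    also have "\<rho> tO *v v = v"
      using v tO by (simp add: TorInv_def)
    finally show ?thesis .
  qed
  with tB that show ?thesis by blast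
qed

lemma matrix_vector_mult_scaleR_left: "(c *\<^sub>R A) *v v = c *\<^sub>R (A *v (v :: 'a::real_algebra_1^'n))"
  by (simp add: vec_eq_iff matrix_vector_mult_def scaleR_sum_right)

lemma matrix_vector_mult_sum_left: "(\<Sum>b\<in>S. f b) *v v = (\<Sum>b\<in>S. f b *v (v :: 'a::comm_ring_1^'n))"
  by (induction S rule: infinite_finite_induct) (simp_all add: matrix_vector_mult_add_rdistrib)

lemma bounded_linear_matrix_vector_mult_left: "bounded_linear (\<lambda>M::complex^'m^'m. M *v v)"
proof -
  have "linear (\<lambda>M::complex^'m^'m. M *v v)"
    by (rule linearI) (simp_all add: matrix_vector_mult_add_rdistrib matrix_vector_mult_scaleR_left)
  then show ?thesis
    by (simp add: linear_conv_bounded_linear)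
qed

lemma subspace_TorInv: "subspace (TorInv \<rho>)"
  by (auto simp: subspace_def TorInv_def matrix_vector_right_distrib matrix_vector_mult_scaleR)

lemma haar_integral_fixed_by_intertwiner:
  fixes f :: "complex^'n^'n \<Rightarrow> complex^'m"
  assumes M: "is_haar G M" "G \<in> sets borel" and f: "integrable M f" and A: "A \<in> G"
    and intertwines: "\<And>X. X \<in> G \<Longrightarrow> T *v f X = f (A ** X)"
  shows "T *v integral\<^sup>L M f = integral\<^sup>L M f"
proof -
  have f_borel: "f \<in> borel_measurable borel"
    using borel_measurable_integrable[OF f] by (simp add: measurable_cong_sets[OF is_haar_sets[OF M(1)] refl])
  have "T *v integral\<^sup>L M f = (\<integral>X. T *v f X \<partial>M)"
    by (rule integral_bounded_linear[OF matrix_vector_mul_bounded_linear f, symmetric])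
  also have "\<dots> = (\<integral>X. f (A ** X) \<partial>M)"
  proof (rule integral_cong_AE)
    show "(\<lambda>X. T *v f X) \<in> borel_measurable M"
      by (rule borel_measurable_integrable, rule integrable_bounded_linear[OF matrix_vector_mul_bounded_linear f])
    show "(\<lambda>X. f (A ** X)) \<in> borel_measurable M"
      using measurable_compose[OF borel_measurable_matrix_mult_left f_borel]
      by (simp add: measurable_cong_sets[OF is_haar_sets[OF M(1)] refl])
    show "AE X in M. T *v f X = f (A ** X)"
      using AE_is_haar[OF M] by eventually_elim (rule intertwines)
  qed
  also have "\<dots> = integral\<^sup>L M f"
    by (rule integral_is_haar_left_mult[OF M(1) A f_borel])
  finally show ?thesis .
qed

lemma haar_average_TorInv:
  assumes rep: "is_rep \<rho>" and v: "v \<in> TorInv \<rho>"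
  shows "integral\<^sup>L (haar_measure (unitary_sub B)) \<rho> *v v \<in> TorInv \<rho>"
proof (cases "integrable (haar_measure (unitary_sub B)) \<rho>")
  case False
  then show ?thesis
    using subspace_0[OF subspace_TorInv] by (simp add: not_integrable_integral_eq)
next
  case True
  define M where "M = haar_measure (unitary_sub B)"
  define f where "f = (\<lambda>X. \<rho> X *v v)"
  have "integrable M f"
    unfolding f_def using True
    by (simp add: M_def integrable_bounded_linear[OF bounded_linear_matrix_vector_mult_left])
  have "integral\<^sup>L M \<rho> *v v = integral\<^sup>L M f"
    unfolding f_def using True
    by (simp add: M_def integral_bounded_linear[OF bounded_linear_matrix_vector_mult_left])
  moreover have "\<rho> t *v integral\<^sup>L M f = integral\<^sup>L M f" if t: "t \<in> torus" for t
  proof -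
    obtain tB where "tB \<in> unitary_sub B" "\<And>X. X \<in> unitary_sub B \<Longrightarrow> \<rho> t *v f X = f (tB ** X)"
      using rep_torus_mult_TorInv[OF rep v t] unfolding f_def by metis
    then show ?thesis
      using haar_measure_unitary_sub borel_closed[OF closed_unitary_sub] \<open>integrable M f\<close>
      unfolding M_def by (intro haar_integral_fixed_by_intertwiner) auto
  qed
  ultimately show ?thesis
    by (simp add: TorInv_def flip: M_def)
qed

theorem proposition3p1:
  fixes \<rho> :: "complex^'n^'n \<Rightarrow> complex^'m^'m" and w :: "'n set \<Rightarrow> real"
  assumes "is_rep \<rho>"
  shows "\<forall>v\<in>TorInv \<rho>. hyper_laplacian w \<rho> *v v \<in> TorInv \<rho>"
proof
  fix v assume v: "v \<in> TorInv \<rho>"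
  have "hyper_laplacian w \<rho> *v v =
      (\<Sum>B\<in>UNIV. w B *\<^sub>R (v - integral\<^sup>L (haar_measure (unitary_sub B)) \<rho> *v v))"
    by (simp add: hyper_laplacian_def matrix_vector_mult_sum_left matrix_vector_mult_scaleR_left
        matrix_vector_mult_diff_rdistrib)
  also have "\<dots> \<in> TorInv \<rho>"
    using v haar_average_TorInv[OF assms v] subspace_TorInv
    by (intro subspace_sum subspace_scale subspace_diff) auto
  finally show "hyper_laplacian w \<rho> *v v \<in> TorInv \<rho>" .
qed

end
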